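(* Let $n\ge2$ and $q=p^h$ with $p$ prime, $h\geq1$. Let $B$ be a minimal blocking set with respect to lines of $PG(n,q)$ such that every line meets $B$ in $1\pmod{p^e}$ points, where $e$ is the largest integer with this property. Assume $p^e>3$ and $\theta_{n-1}<|B|<2q^{n-1}$. Then $$|B|\leq q^{n-1}+\frac{2q^{n-1}}{p^e}.$$
   Context: $\theta_m=(q^{m+1}-1)/(q-1)$. A blocking set with respect to lines is a point set meeting every line. It is minimal if no proper subset is a blocking set. *)

theory Defs
  imports Complex_Main "HOL-Computational_Algebra.Primes" "HOL-Library.Cardinality"
begin

text \<open>Projective space PG(n,F) over a field F: vectors of F^(n+1) are modelled as
  functions nat => F vanishing outside {0..n}.\<close>

definition pg_vecs :: "nat \<Rightarrow> (nat \<Rightarrow> 'a::field) set" where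
  "pg_vecs n = {v. \<forall>i>n. v i = 0}"

definition pg_points :: "nat \<Rightarrow> (nat \<Rightarrow> 'a::field) set set" where
  "pg_points n = {{(\<lambda>i. c * v i) | c. True} | v. v \<in> pg_vecs n \<and> v \<noteq> (\<lambda>i. 0)}"

definition pg_lines :: "nat \<Rightarrow> (nat \<Rightarrow> 'a::field) set set" where
  "pg_lines n = {{(\<lambda>i. a * u i + b * w i) | a b. True} | u w.
      u \<in> pg_vecs n \<and> w \<in> pg_vecs n \<and> u \<noteq> (\<lambda>i. 0) \<and> (\<forall>c. w \<noteq> (\<lambda>i. c * u i))}"

definition blocking_set :: "nat \<Rightarrow> (nat \<Rightarrow> 'a::field) set set \<Rightarrow> bool" where
  "blocking_set n B \<longleftrightarrow> B \<subseteq> pg_points n \<and> (\<forall>L\<in>pg_lines n. \<exists>P\<in>B. P \<subseteq> L)"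

definition minimal_blocking_set :: "nat \<Rightarrow> (nat \<Rightarrow> 'a::field) set set \<Rightarrow> bool" where
  "minimal_blocking_set n B \<longleftrightarrow> blocking_set n B \<and> (\<forall>B'. B' \<subset> B \<longrightarrow> \<not> blocking_set n B')"

definition lines_meet_one_mod :: "nat \<Rightarrow> (nat \<Rightarrow> 'a::field) set set \<Rightarrow> nat \<Rightarrow> bool" where
  "lines_meet_one_mod n B m \<longleftrightarrow> (\<forall>L\<in>pg_lines n. card {P\<in>B. P \<subseteq> L} mod m = 1 mod m)"

end

theory Submission
  imports Defs "HOL-Library.FuncSet"
begin

(*
  In a locale for a finite incidence structure with
     lines of size q + 1 and unique lines through two points, double counting
     gives the replication number r and the standard equations
     sum_L i(L) = |B| r and sum_L i(L)(i(L) - 1) = |B|(|B| - 1).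
     If every i(L) is 1 mod m, summing (i(L) - 1)(i(L) - 1 - m) >= 0 yields the
     variance inequality (1 + m) r (|B| - N/(q+1)) <= |B|(|B| - 1).
  3. Real arithmetic.  For the parameters of PG(n,q) the quadratic
     b(b - 1) - (1 + m) r (b - N/(q+1)) is negative at b = Q + 2Q/m and
     non-positive at b = 2Q (Q = q^(n-1), 4 <= m <= q), hence by convexity
     negative in between, which excludes Q + 2Q/m < |B| < 2Q.
  The theorem combines these; maximality of e provides a line meeting B in more
  than one point, whence p^e <= q.
*)

definition vpoint :: "(nat \<Rightarrow> 'a::field) \<Rightarrow> (nat \<Rightarrow> 'a) set" where
  "vpoint v = {(\<lambda>i. c * v i) | c. True}"

definition vline :: "(nat \<Rightarrow> 'a::field) \<Rightarrow> (nat \<Rightarrow> 'a) \<Rightarrow> (nat \<Rightarrow> 'a) set" where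
  "vline u w = {(\<lambda>i. a * u i + b * w i) | a b. True}"

definition indep :: "(nat \<Rightarrow> 'a::field) \<Rightarrow> (nat \<Rightarrow> 'a) \<Rightarrow> bool" where
  "indep u w \<longleftrightarrow> u \<noteq> (\<lambda>i. 0) \<and> (\<forall>c. w \<noteq> (\<lambda>i. c * u i))"

lemma pg_points_vpoint: "pg_points n = {vpoint v | v. v \<in> pg_vecs n \<and> v \<noteq> (\<lambda>i. 0)}"
  by (simp add: pg_points_def vpoint_def)

lemma pg_lines_vline:
  "pg_lines n = {vline u w | u w. u \<in> pg_vecs n \<and> w \<in> pg_vecs n \<and> indep u w}"
  by (simp add: pg_lines_def vline_def indep_def)

lemma indep_combination_zero:
  assumes "indep u w" "(\<lambda>i. a * u i + b * w i) = (\<lambda>i. 0)"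
  shows "a = 0 \<and> b = 0"
proof -
  have b: "b = 0"
  proof (rule ccontr)
    assume "b \<noteq> 0"
    have "w = (\<lambda>i. (- a / b) * u i)"
    proof
      fix i
      have "a * u i + b * w i = 0" using assms(2) by (simp add: fun_eq_iff)
      then show "w i = (- a / b) * u i" using \<open>b \<noteq> 0\<close>
        by (simp add: field_simps) (metis add.commute add_eq_0_iff2 mult.commute)
    qed
    then show False using assms(1) unfolding indep_def by blast
  qed
  then have "(\<lambda>i. a * u i) = (\<lambda>i. 0)" using assms(2) by simp
  moreover have "u \<noteq> (\<lambda>i. 0)" using assms(1) indep_def by blast
  ultimately have "a = 0" by (metis mult_eq_0_iff)
  with b show ?thesis by simp
qed

lemma in_vpoint: "v \<in> vpoint v"
  unfolding vpoint_def by (rule CollectI, rule exI[of _ 1]) simp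

lemma vpoint_subset_vline: "vpoint v \<subseteq> vline u w \<longleftrightarrow> v \<in> vline u w"
proof
  assume "v \<in> vline u w"
  then obtain a b where v: "v = (\<lambda>i. a * u i + b * w i)" unfolding vline_def by blast
  show "vpoint v \<subseteq> vline u w"
  proof
    fix x assume "x \<in> vpoint v"
    then obtain c where "x = (\<lambda>i. c * v i)" unfolding vpoint_def by blast
    then have "x = (\<lambda>i. (c*a) * u i + (c*b) * w i)" using v by (simp add: algebra_simps)
    then show "x \<in> vline u w" unfolding vline_def by blast
  qed
qed (use in_vpoint in blast)

lemma vpoint_eq:
  assumes "x \<in> vpoint v" "x \<noteq> (\<lambda>i. 0)"
  shows "vpoint x = vpoint v"
proof -
  obtain c where x: "x = (\<lambda>i. c * v i)" using assms(1) unfolding vpoint_def by blast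
  have c: "c \<noteq> 0" using assms(2) x by auto
  show ?thesis
  proof
    show "vpoint x \<subseteq> vpoint v"
    proof
      fix y assume "y \<in> vpoint x"
      then obtain d where y: "y = (\<lambda>i. d * x i)" unfolding vpoint_def by blast
      have "y = (\<lambda>i. (d * c) * v i)" unfolding y x by (simp add: mult.assoc)
      then show "y \<in> vpoint v" unfolding vpoint_def by blast
    qed
    show "vpoint v \<subseteq> vpoint x"
    proof
      fix y assume "y \<in> vpoint v"
      then obtain d where y: "y = (\<lambda>i. d * v i)" unfolding vpoint_def by blast
      have "y = (\<lambda>i. (d / c) * x i)" using c unfolding x y by (simp add: fun_eq_iff)
      then show "y \<in> vpoint x" unfolding vpoint_def by blast
    qed
  qed
qed

lemma distinct_vpoints_indep:
  assumes "x \<noteq> (\<lambda>i. 0)" "y \<noteq> (\<lambda>i. 0)" "vpoint x \<noteq> vpoint y"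
  shows "indep x y"
  unfolding indep_def
proof (intro conjI allI)
  fix c show "y \<noteq> (\<lambda>i. c * x i)"
  proof
    assume "y = (\<lambda>i. c * x i)"
    then have "y \<in> vpoint x" unfolding vpoint_def by blast
    then show False using vpoint_eq assms(2,3) by metis
  qed
qed fact

lemma in_vline: "u \<in> vline u w" "w \<in> vline u w"
  unfolding vline_def
  by (rule CollectI, rule exI[of _ 1], rule exI[of _ 0], simp)
     (rule CollectI, rule exI[of _ 0], rule exI[of _ 1], simp)

lemma vline_subset:
  assumes "x \<in> vline u w" "y \<in> vline u w"
  shows "vline x y \<subseteq> vline u w"
proof
  obtain a1 b1 where x: "x = (\<lambda>i. a1 * u i + b1 * w i)" using assms(1) unfolding vline_def by blast
  obtain a2 b2 where y: "y = (\<lambda>i. a2 * u i + b2 * w i)" using assms(2) unfolding vline_def by blast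
  fix z assume "z \<in> vline x y"
  then obtain a b where z: "z = (\<lambda>i. a * x i + b * y i)" unfolding vline_def by blast
  have "z = (\<lambda>i. (a*a1 + b*a2) * u i + (a*b1 + b*b2) * w i)"
    unfolding z x y by (simp add: algebra_simps)
  then show "z \<in> vline u w" unfolding vline_def by blast
qed

lemma vline_eq:
  assumes uw: "indep u w" and xy: "indep x y" and "x \<in> vline u w" "y \<in> vline u w"
  shows "vline x y = vline u w"
proof
  show "vline x y \<subseteq> vline u w" using vline_subset assms by blast
  obtain a1 b1 where x: "x = (\<lambda>i. a1 * u i + b1 * w i)" using assms(3) unfolding vline_def by blast
  obtain a2 b2 where y: "y = (\<lambda>i. a2 * u i + b2 * w i)" using assms(4) unfolding vline_def by blast
  define d where "d = a1*b2 - a2*b1"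
  have d: "d \<noteq> 0"
  proof
    assume d0: "d = 0"
    have "(\<lambda>i. b2 * x i + (-b1) * y i) = (\<lambda>i. 0)" "(\<lambda>i. a2 * x i + (-a1) * y i) = (\<lambda>i. 0)"
      unfolding x y using d0 unfolding d_def by (simp_all add: fun_eq_iff algebra_simps)
    then have "b2 = 0 \<and> -b1 = 0" "a2 = 0 \<and> -a1 = 0" using indep_combination_zero[OF xy] by blast+
    then have "a1 = 0 \<and> b1 = 0" by simp
    then have "x = (\<lambda>i. 0)" unfolding x by simp
    then show False using xy indep_def by blast
  qed
  have "u = (\<lambda>i. (b2/d) * x i + (-b1/d) * y i)" "w = (\<lambda>i. (-a2/d) * x i + (a1/d) * y i)"
  proof -
    have "d * u i = b2 * x i - b1 * y i" "d * w i = a1 * y i - a2 * x i" for i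
      unfolding x y d_def by (simp_all add: algebra_simps)
    then show "u = (\<lambda>i. (b2/d) * x i + (-b1/d) * y i)" "w = (\<lambda>i. (-a2/d) * x i + (a1/d) * y i)"
      using d by (simp_all add: fun_eq_iff field_simps)
  qed
  then have "u \<in> vline x y" "w \<in> vline x y" unfolding vline_def by blast+
  then show "vline u w \<subseteq> vline x y" using vline_subset by blast
qed

lemma pg_vecs_bij:
  "bij_betw (\<lambda>v. restrict v {..n}) (pg_vecs n) (PiE {..n} (\<lambda>_. UNIV :: 'a::field set))"
proof (rule bij_betw_imageI)
  show "inj_on (\<lambda>v. restrict v {..n}) (pg_vecs n)"
  proof (rule inj_onI)
    fix v w
    assume v: "v \<in> pg_vecs n" and w: "w \<in> pg_vecs n"
      and e: "restrict v {..n} = restrict w {..n}"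
    show "v = w"
    proof (rule ext)
      fix i show "v i = w i"
      proof (cases "i \<le> n")
        case True
        then show ?thesis using e by (metis atMost_iff restrict_apply')
      next
        case False
        then show ?thesis using v w by (simp add: pg_vecs_def)
      qed
    qed
  qed
  show "(\<lambda>v. restrict v {..n}) ` pg_vecs n = PiE {..n} (\<lambda>_. UNIV :: 'a set)"
  proof
    show "(\<lambda>v. restrict v {..n}) ` pg_vecs n \<subseteq> PiE {..n} (\<lambda>_. UNIV :: 'a set)"
      by (intro image_subsetI restrict_PiE) auto
    show "PiE {..n} (\<lambda>_. UNIV :: 'a set) \<subseteq> (\<lambda>v. restrict v {..n}) ` pg_vecs n"
    proof
      fix g assume g: "g \<in> PiE {..n} (\<lambda>_. UNIV :: 'a set)"
      have "g = restrict (\<lambda>i. if i \<le> n then g i else 0) {..n}"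
        using g by (auto simp: fun_eq_iff PiE_def extensional_def)
      moreover have "(\<lambda>i. if i \<le> n then g i else 0) \<in> pg_vecs n" by (simp add: pg_vecs_def)
      ultimately show "g \<in> (\<lambda>v. restrict v {..n}) ` pg_vecs n" by blast
    qed
  qed
qed

lemma finite_pg_vecs: "finite (pg_vecs n :: (nat \<Rightarrow> 'a::{finite,field}) set)"
proof -
  have "finite (PiE {..n} (\<lambda>_. UNIV :: 'a set))" by (rule finite_PiE) auto
  then show ?thesis using bij_betw_finite[OF pg_vecs_bij] by blast
qed

lemma card_pg_vecs: "card (pg_vecs n :: (nat \<Rightarrow> 'a::{finite,field}) set) = CARD('a) ^ Suc n"
  using bij_betw_same_card[OF pg_vecs_bij] by (simp add: card_PiE)

lemma vpoint_subset_vecs: "v \<in> pg_vecs n \<Longrightarrow> vpoint v \<subseteq> pg_vecs n"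
  by (auto simp: vpoint_def pg_vecs_def)

lemma vline_subset_vecs: "u \<in> pg_vecs n \<Longrightarrow> w \<in> pg_vecs n \<Longrightarrow> vline u w \<subseteq> pg_vecs n"
  by (auto simp: vline_def pg_vecs_def)

lemma finite_pg_points: "finite (pg_points n :: (nat \<Rightarrow> 'a::{finite,field}) set set)"
proof -
  have "pg_points n \<subseteq> Pow (pg_vecs n :: (nat \<Rightarrow> 'a) set)"
    unfolding pg_points_vpoint using vpoint_subset_vecs by blast
  then show ?thesis using finite_pg_vecs finite_subset by blast
qed

lemma finite_pg_lines: "finite (pg_lines n :: (nat \<Rightarrow> 'a::{finite,field}) set set)"
proof -
  have "pg_lines n \<subseteq> Pow (pg_vecs n :: (nat \<Rightarrow> 'a) set)"
    unfolding pg_lines_vline using vline_subset_vecs by blast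
  then show ?thesis using finite_pg_vecs finite_subset by blast
qed

lemma card_vpoint_nonzero:
  fixes v :: "nat \<Rightarrow> 'a::{finite,field}"
  assumes v: "v \<noteq> (\<lambda>i. 0)"
  shows "card (vpoint v - {\<lambda>i. 0}) = CARD('a) - 1"
proof -
  have "vpoint v - {\<lambda>i. 0} = (\<lambda>c. (\<lambda>i. c * v i)) ` (UNIV - {0})"
    using v unfolding vpoint_def by (auto simp: fun_eq_iff)
  moreover have "inj (\<lambda>c::'a. (\<lambda>i. c * v i))"
  proof (rule injI)
    fix c d :: 'a assume "(\<lambda>i. c * v i) = (\<lambda>i. d * v i)"
    moreover obtain i where "v i \<noteq> 0" using v by (auto simp: fun_eq_iff)
    ultimately show "c = d" by (metis mult_right_cancel)
  qed
  ultimately show ?thesis by (simp add: card_image inj_on_subset card_Diff_singleton)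
qed

text \<open>The nonzero vectors of F^(n+1) are partitioned by the points, each holding
  q - 1 of them; hence |PG(n,q)| (q - 1) = q^(n+1) - 1.\<close>
lemma card_pg_points:
  "card (pg_points n :: (nat \<Rightarrow> 'a::{finite,field}) set set) * (CARD('a) - 1)
     = CARD('a) ^ Suc n - 1"
proof -
  let ?Z = "(\<lambda>i. 0) :: nat \<Rightarrow> 'a"
  let ?P = "pg_points n :: (nat \<Rightarrow> 'a) set set"
  have partition: "pg_vecs n - {?Z} = (\<Union>P\<in>?P. P - {?Z})"
    unfolding pg_points_vpoint using vpoint_subset_vecs in_vpoint by blast
  have disjoint: "(P - {?Z}) \<inter> (P' - {?Z}) = {}"
    if PP': "P \<in> ?P" "P' \<in> ?P" "P \<noteq> P'" for P P'
  proof (rule ccontr)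
    assume "(P - {?Z}) \<inter> (P' - {?Z}) \<noteq> {}"
    then obtain x where x: "x \<in> P" "x \<in> P'" "x \<noteq> ?Z" by blast
    obtain v v' where "P = vpoint v" "P' = vpoint v'" using PP' unfolding pg_points_vpoint by blast
    then have "vpoint x = P" "vpoint x = P'" using vpoint_eq x by blast+
    then show False using PP'(3) by simp
  qed
  have fibre: "card (P - {?Z}) = CARD('a) - 1" if "P \<in> ?P" for P
    using that card_vpoint_nonzero unfolding pg_points_vpoint by blast
  have finite_point: "finite P" if "P \<in> ?P" for P
    using that finite_subset[OF vpoint_subset_vecs finite_pg_vecs] unfolding pg_points_vpoint by blast
  have "card (pg_vecs n - {?Z}) = (\<Sum>P\<in>?P. card (P - {?Z}))"
    unfolding partition using finite_pg_points finite_point disjoint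
    by (intro card_UN_disjoint) auto
  also have "\<dots> = card ?P * (CARD('a) - 1)"
    using fibre by simp
  finally show ?thesis
    using card_pg_vecs[where 'a='a] finite_pg_vecs[where 'a='a]
    by (simp add: card_Diff_singleton pg_vecs_def)
qed

text \<open>The points of the line spanned by independent u and w are
  \<langle>w\<rangle> and \<langle>u + t w\<rangle>, t \<in> F.\<close>
definition line_point :: "(nat \<Rightarrow> 'a::field) \<Rightarrow> (nat \<Rightarrow> 'a) \<Rightarrow> 'a option \<Rightarrow> (nat \<Rightarrow> 'a) set" where
  "line_point u w x = (case x of None \<Rightarrow> vpoint w | Some t \<Rightarrow> vpoint (\<lambda>i. u i + t * w i))"

lemma line_point_on_vline:
  assumes "u \<in> pg_vecs n" "w \<in> pg_vecs n" "indep u w"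
  shows "line_point u w x \<in> pg_points n" "line_point u w x \<subseteq> vline u w"
proof -
  have nonzero: "(\<lambda>i. a * u i + b * w i) \<noteq> (\<lambda>i. 0)" if "a \<noteq> 0 \<or> b \<noteq> 0" for a b
    using indep_combination_zero[OF assms(3)] that by blast
  obtain v where v: "line_point u w x = vpoint v" "v \<in> pg_vecs n" "v \<in> vline u w" "v \<noteq> (\<lambda>i. 0)"
  proof (cases x)
    case None
    show thesis
      by (rule that[of w]) (use None assms in_vline nonzero[of 0 1] in \<open>simp_all add: line_point_def\<close>)
  next
    case (Some t)
    have "(\<lambda>i. u i + t * w i) \<in> pg_vecs n" using assms by (simp add: pg_vecs_def)
    moreover have "(\<lambda>i. u i + t * w i) \<in> vline u w"
      unfolding vline_def by (rule CollectI, rule exI[of _ 1], rule exI[of _ t]) simp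
    ultimately show thesis using that Some nonzero[of 1 t] by (simp add: line_point_def)
  qed
  then show "line_point u w x \<in> pg_points n" "line_point u w x \<subseteq> vline u w"
    unfolding pg_points_vpoint using vpoint_subset_vline by blast+
qed

lemma points_on_vline:
  assumes "u \<in> pg_vecs n" "w \<in> pg_vecs n" "indep u w"
  shows "{P \<in> pg_points n. P \<subseteq> vline u w} = range (line_point u w)"
proof
  show "range (line_point u w) \<subseteq> {P \<in> pg_points n. P \<subseteq> vline u w}"
    using line_point_on_vline[OF assms] by blast
  show "{P \<in> pg_points n. P \<subseteq> vline u w} \<subseteq> range (line_point u w)"
  proof safe
    fix P assume "P \<in> pg_points n" "P \<subseteq> vline u w"
    then obtain v where v: "P = vpoint v" "v \<noteq> (\<lambda>i. 0)" "v \<in> vline u w"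
      unfolding pg_points_vpoint using vpoint_subset_vline by blast
    then obtain a b where vab: "v = (\<lambda>i. a * u i + b * w i)" unfolding vline_def by blast
    show "P \<in> range (line_point u w)"
    proof (cases "a = 0")
      case True
      then have "v \<in> vpoint w" unfolding vab vpoint_def by auto
      then have "P = line_point u w None" using vpoint_eq v unfolding line_point_def by simp
      then show ?thesis by blast
    next
      case False
      have "v = (\<lambda>i. a * (u i + (b/a) * w i))"
        unfolding vab using False by (simp add: fun_eq_iff field_simps)
      then have "v \<in> vpoint (\<lambda>i. u i + (b/a) * w i)" unfolding vpoint_def by blast
      then have "P = line_point u w (Some (b/a))" using vpoint_eq v unfolding line_point_def by simp
      then show ?thesis by blast
    qed
  qed
qed

lemma inj_line_point:
  assumes "indep u w"
  shows "inj (line_point u w)"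
proof -
  have ne_None: "vpoint (\<lambda>i. u i + t * w i) \<noteq> vpoint w" for t
  proof
    assume "vpoint (\<lambda>i. u i + t * w i) = vpoint w"
    then obtain c where "(\<lambda>i. u i + t * w i) = (\<lambda>i. c * w i)" using in_vpoint unfolding vpoint_def by blast
    then have "(\<lambda>i. 1 * u i + (t - c) * w i) = (\<lambda>i. 0)" by (simp add: fun_eq_iff algebra_simps)
    then show False using indep_combination_zero[OF assms, of 1 "t - c"] by simp
  qed
  have eq_Some: "t = t'" if eq: "vpoint (\<lambda>i. u i + t * w i) = vpoint (\<lambda>i. u i + t' * w i)" for t t'
  proof -
    obtain c where "(\<lambda>i. u i + t' * w i) = (\<lambda>i. c * (u i + t * w i))"
      using eq in_vpoint unfolding vpoint_def by blast
    then have "(\<lambda>i. (1 - c) * u i + (t' - c * t) * w i) = (\<lambda>i. 0)"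
      by (simp add: fun_eq_iff algebra_simps)
    then show "t = t'" using indep_combination_zero[OF assms, of "1 - c" "t' - c * t"] by simp
  qed
  show ?thesis
  proof (rule injI)
    fix x y assume "line_point u w x = line_point u w y"
    then show "x = y"
      using ne_None eq_Some by (cases x; cases y) (auto simp: line_point_def)
  qed
qed

lemma card_points_on_line:
  assumes "L \<in> (pg_lines n :: (nat \<Rightarrow> 'a::{finite,field}) set set)"
  shows "card {P \<in> pg_points n. P \<subseteq> L} = CARD('a) + 1"
proof -
  obtain u w :: "nat \<Rightarrow> 'a" where uw: "L = vline u w" "u \<in> pg_vecs n" "w \<in> pg_vecs n" "indep u w"
    using assms unfolding pg_lines_vline by blast
  have "card {P \<in> pg_points n. P \<subseteq> L} = card (range (line_point u w))"
    using points_on_vline[OF uw(2-4)] uw(1) by simp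
  also have "\<dots> = CARD('a option)" using inj_line_point[OF uw(4)] by (rule card_image)
  finally show ?thesis by (simp add: card_UNIV_option)
qed

lemma card_lines_through_two_points:
  assumes "P \<in> pg_points n" "Q \<in> pg_points n" "P \<noteq> Q"
  shows "card {L \<in> pg_lines n. P \<subseteq> L \<and> Q \<subseteq> L} = 1"
proof -
  obtain x y where x: "P = vpoint x" "x \<in> pg_vecs n" "x \<noteq> (\<lambda>i. 0)"
    and y: "Q = vpoint y" "y \<in> pg_vecs n" "y \<noteq> (\<lambda>i. 0)"
    using assms(1,2) unfolding pg_points_vpoint by blast
  have xy: "indep x y" using distinct_vpoints_indep x y assms(3) by blast
  have "{L \<in> pg_lines n. P \<subseteq> L \<and> Q \<subseteq> L} = {vline x y}"
  proof
    show "{vline x y} \<subseteq> {L \<in> pg_lines n. P \<subseteq> L \<and> Q \<subseteq> L}"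
      using xy x y in_vline vpoint_subset_vline unfolding pg_lines_vline by blast
    show "{L \<in> pg_lines n. P \<subseteq> L \<and> Q \<subseteq> L} \<subseteq> {vline x y}"
    proof
      fix L assume "L \<in> {L \<in> pg_lines n. P \<subseteq> L \<and> Q \<subseteq> L}"
      then obtain u w where L: "L = vline u w" "indep u w" "P \<subseteq> L" "Q \<subseteq> L"
        unfolding pg_lines_vline by blast
      then have "x \<in> vline u w" "y \<in> vline u w" using x y vpoint_subset_vline by blast+
      then show "L \<in> {vline x y}" using L by (simp add: vline_eq[OF L(2) xy])
    qed
  qed
  then show ?thesis by simp
qed

lemma double_count:
  assumes "finite A" "finite C"
  shows "(\<Sum>a\<in>A. card {c\<in>C. R a c}) = (\<Sum>c\<in>C. card {a\<in>A. R a c})"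
proof -
  have "(\<Sum>a\<in>A. card {c\<in>C. R a c}) = (\<Sum>a\<in>A. \<Sum>c\<in>C. if R a c then 1 else 0)"
    using assms by (simp add: sum.inter_filter[symmetric])
  also have "\<dots> = (\<Sum>c\<in>C. \<Sum>a\<in>A. if R a c then 1 else 0)" by (rule sum.swap)
  also have "\<dots> = (\<Sum>c\<in>C. card {a\<in>A. R a c})"
    using assms by (simp add: sum.inter_filter[symmetric])
  finally show ?thesis .
qed

lemma card_ordered_pairs_distinct:
  assumes "finite X"
  shows "card {xy \<in> X \<times> X. fst xy \<noteq> snd xy} = card X * (card X - 1)"
proof -
  have "{xy \<in> X \<times> X. fst xy \<noteq> snd xy} = X \<times> X - (\<lambda>a. (a, a)) ` X" by auto
  moreover have "card ((\<lambda>a. (a, a)) ` X) = card X" by (rule card_image) (auto simp: inj_on_def)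
  ultimately show ?thesis
    using assms by (simp add: card_Diff_subset card_cartesian_product diff_mult_distrib2 image_subset_iff)
qed

lemma one_mod_ge:
  fixes i m :: nat
  assumes "i mod m = 1" "i \<noteq> 1"
  shows "m + 1 \<le> i"
proof -
  have "i = i div m * m + 1" using assms(1) div_mult_mod_eq[of i m] by simp
  moreover have "i div m \<noteq> 0"
  proof
    assume "i div m = 0"
    with calculation have "i = 1" by simp
    with assms(2) show False ..
  qed
  then have "m \<le> i div m * m" by simp
  ultimately show ?thesis by linarith
qed

text \<open>If i = 1 + m t then (i - 1)(i - 1 - m) = m^2 t (t - 1) \<ge> 0.\<close>
lemma one_mod_quadratic_nonneg:
  fixes i m :: nat
  assumes "i mod m = 1"
  shows "0 \<le> real i * (real i - 1) - (1 + real m) * real i + (1 + real m)"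
proof -
  define t where "t = i div m"
  have "i = m * t + 1" using assms div_mult_mod_eq[of i m] unfolding t_def by (simp add: mult.commute)
  then have "real i * (real i - 1) - (1 + real m) * real i + (1 + real m)
      = real m * real m * (real t * (real t - 1))"
    by (simp add: algebra_simps)
  moreover have "0 \<le> real t * (real t - 1)" by (cases t) auto
  ultimately show ?thesis by simp
qed

text \<open>The cast of k (k - 1) to the reals, valid also for k = 0.\<close>
lemma of_nat_mult_pred: "real (x * (x - 1)) = real x * (real x - 1)"
  by (cases x) (auto simp: algebra_simps)

locale finite_linear_space =
  fixes Pts :: "'p set" and Ls :: "'l set" and I :: "'p \<Rightarrow> 'l \<Rightarrow> bool" and q :: nat
  assumes finite_Pts: "finite Pts" and finite_Ls: "finite Ls"
    and order_pos: "q \<ge> 1"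
    and line_size: "\<And>L. L \<in> Ls \<Longrightarrow> card {P \<in> Pts. I P L} = q + 1"
    and unique_line: "\<And>P Q. P \<in> Pts \<Longrightarrow> Q \<in> Pts \<Longrightarrow> P \<noteq> Q \<Longrightarrow> card {L \<in> Ls. I P L \<and> I Q L} = 1"
begin

text \<open>The replication number: the number of lines through any point.\<close>
definition replication :: nat where
  "replication = (card Pts - 1) div q"

text \<open>Counting the other points via the lines through P: deg(P) q = |Pts| - 1.\<close>
lemma degree_times_order:
  assumes P: "P \<in> Pts"
  shows "card {L \<in> Ls. I P L} * q = card Pts - 1"
proof -
  let ?LP = "{L \<in> Ls. I P L}"
  have "card Pts - 1 = (\<Sum>Q\<in>Pts - {P}. 1)" using P finite_Pts by simp
  also have "\<dots> = (\<Sum>Q\<in>Pts - {P}. card {L \<in> ?LP. I Q L})"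
  proof (rule sum.cong[OF refl])
    fix Q assume "Q \<in> Pts - {P}"
    moreover have "{L \<in> ?LP. I Q L} = {L \<in> Ls. I P L \<and> I Q L}" by auto
    ultimately show "1 = card {L \<in> ?LP. I Q L}" using unique_line[of P Q] P by auto
  qed
  also have "\<dots> = (\<Sum>L\<in>?LP. card {Q \<in> Pts - {P}. I Q L})"
    by (rule double_count[symmetric]) (use finite_Ls finite_Pts in auto)
  also have "\<dots> = (\<Sum>L\<in>?LP. q)"
  proof (rule sum.cong[OF refl])
    fix L assume L: "L \<in> ?LP"
    have "{Q \<in> Pts - {P}. I Q L} = {Q \<in> Pts. I Q L} - {P}" by auto
    then show "card {Q \<in> Pts - {P}. I Q L} = q"
      using L P finite_Pts line_size[of L] by simp
  qed
  finally show ?thesis by simp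
qed

lemma point_degree: "P \<in> Pts \<Longrightarrow> card {L \<in> Ls. I P L} = replication"
  using degree_times_order order_pos unfolding replication_def
  by (metis div_mult_self_is_m less_le_trans zero_less_one)

lemma card_points:
  assumes "L \<in> Ls"
  shows "card Pts = replication * q + 1"
proof -
  have "{P \<in> Pts. I P L} \<noteq> {}" using line_size[OF assms] by (intro notI) simp
  then obtain P where "P \<in> Pts" by blast
  then have "replication * q = card Pts - 1" using point_degree degree_times_order by simp
  moreover have "card Pts \<ge> 1"
    using \<open>P \<in> Pts\<close> finite_Pts by (metis One_nat_def Suc_leI card_gt_0_iff empty_iff)
  ultimately show ?thesis by simp
qed

text \<open>Counting incident point-line pairs: |Ls| (q + 1) = |Pts| r.\<close>
lemma card_lines: "card Ls * (q + 1) = card Pts * replication"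
proof -
  have "card Ls * (q + 1) = (\<Sum>L\<in>Ls. card {P \<in> Pts. I P L})" using line_size by simp
  also have "\<dots> = (\<Sum>P\<in>Pts. card {L \<in> Ls. I P L})" by (rule double_count[OF finite_Ls finite_Pts])
  also have "\<dots> = card Pts * replication" using point_degree by simp
  finally show ?thesis .
qed

lemma sum_intersections:
  assumes "B \<subseteq> Pts"
  shows "(\<Sum>L\<in>Ls. card {P \<in> B. I P L}) = card B * replication"
proof -
  have "(\<Sum>L\<in>Ls. card {P \<in> B. I P L}) = (\<Sum>P\<in>B. card {L \<in> Ls. I P L})"
    using assms finite_Ls finite_Pts finite_subset by (intro double_count) auto
  also have "\<dots> = card B * replication" using point_degree assms by (simp add: subset_iff)
  finally show ?thesis .
qed

lemma sum_intersection_pairs: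
  assumes "B \<subseteq> Pts"
  shows "(\<Sum>L\<in>Ls. card {P \<in> B. I P L} * (card {P \<in> B. I P L} - 1)) = card B * (card B - 1)"
proof -
  have fB: "finite B" using assms finite_Pts finite_subset by blast
  let ?O = "{xy \<in> B \<times> B. fst xy \<noteq> snd xy}"
  have "(\<Sum>L\<in>Ls. card {P \<in> B. I P L} * (card {P \<in> B. I P L} - 1))
      = (\<Sum>L\<in>Ls. card {xy \<in> ?O. I (fst xy) L \<and> I (snd xy) L})"
  proof (rule sum.cong[OF refl])
    fix L
    have "{xy \<in> ?O. I (fst xy) L \<and> I (snd xy) L}
        = {xy \<in> {P \<in> B. I P L} \<times> {P \<in> B. I P L}. fst xy \<noteq> snd xy}" by auto
    then show "card {P \<in> B. I P L} * (card {P \<in> B. I P L} - 1)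
        = card {xy \<in> ?O. I (fst xy) L \<and> I (snd xy) L}"
      using card_ordered_pairs_distinct[of "{P \<in> B. I P L}"] fB by simp
  qed
  also have "\<dots> = (\<Sum>xy\<in>?O. card {L \<in> Ls. I (fst xy) L \<and> I (snd xy) L})"
    using fB finite_Ls by (intro double_count) auto
  also have "\<dots> = (\<Sum>xy\<in>?O. 1)"
    using assms by (intro sum.cong[OF refl] unique_line) auto
  also have "\<dots> = card B * (card B - 1)" using card_ordered_pairs_distinct[OF fB] by simp
  finally show ?thesis .
qed

lemma modulus_le_order:
  assumes "B \<subseteq> Pts" "L \<in> Ls" "card {P \<in> B. I P L} mod m = 1" "card {P \<in> B. I P L} \<noteq> 1"
  shows "m \<le> q"
proof -
  have "card {P \<in> B. I P L} \<le> card {P \<in> Pts. I P L}"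
    using assms(1) finite_Pts by (intro card_mono) auto
  then show ?thesis using one_mod_ge[OF assms(3,4)] line_size[OF assms(2)] by simp
qed

text \<open>The variance argument: summing (i(L) - 1)(i(L) - 1 - m) \<ge> 0 over all lines and
  evaluating with the standard equations.\<close>
lemma variance_inequality:
  assumes B: "B \<subseteq> Pts" and one_mod: "\<And>L. L \<in> Ls \<Longrightarrow> card {P \<in> B. I P L} mod m = 1"
  shows "(1 + real m) * real replication * (real (card B) - real (card Pts) / (real q + 1))
           \<le> real (card B) * (real (card B) - 1)"
proof -
  define i where "i L = real (card {P \<in> B. I P L})" for L
  have "0 \<le> (\<Sum>L\<in>Ls. i L * (i L - 1) - (1 + real m) * i L + (1 + real m))"
    unfolding i_def using one_mod one_mod_quadratic_nonneg by (intro sum_nonneg) auto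
  also have "\<dots> = (\<Sum>L\<in>Ls. i L * (i L - 1)) - (1 + real m) * (\<Sum>L\<in>Ls. i L)
                   + (1 + real m) * real (card Ls)"
    by (simp add: sum.distrib sum_subtractf sum_distrib_left)
  also have "(\<Sum>L\<in>Ls. i L * (i L - 1)) = real (card B) * (real (card B) - 1)"
    using sum_intersection_pairs[OF B] unfolding i_def
    by (metis (no_types, lifting) of_nat_mult_pred of_nat_sum sum.cong)
  also have "(\<Sum>L\<in>Ls. i L) = real (card B) * real replication"
    using sum_intersections[OF B] unfolding i_def by (metis of_nat_mult of_nat_sum)
  also have "real (card Ls) = real replication * (real (card Pts) / (real q + 1))"
    using card_lines by (simp add: field_simps flip: of_nat_mult)
  finally show ?thesis by (simp add: field_simps)
qed

end

lemma monic_quadratic_negative_between: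
  fixes x0 x1 x \<beta> \<gamma> :: real
  assumes "x0 \<le> x" "x < x1"
    and "x0 * x0 + \<beta> * x0 + \<gamma> < 0" "x1 * x1 + \<beta> * x1 + \<gamma> \<le> 0"
  shows "x * x + \<beta> * x + \<gamma> < 0"
proof -
  have chord: "(x1 - x0) * (x * x + \<beta> * x + \<gamma>)
      = (x1 - x) * (x0 * x0 + \<beta> * x0 + \<gamma>) + (x - x0) * (x1 * x1 + \<beta> * x1 + \<gamma>)
        - (x - x0) * (x1 - x) * (x1 - x0)"
    by (simp add: algebra_simps)
  have "(x1 - x) * (x0 * x0 + \<beta> * x0 + \<gamma>) < 0" using assms by (simp add: mult_pos_neg)
  moreover have "(x - x0) * (x1 * x1 + \<beta> * x1 + \<gamma>) \<le> 0" using assms by (simp add: mult_nonneg_nonpos)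
  moreover have "(x - x0) * (x1 - x) * (x1 - x0) \<ge> 0" using assms by simp
  ultimately have "(x1 - x0) * (x * x + \<beta> * x + \<gamma>) < 0" unfolding chord by linarith
  then show ?thesis using assms by (simp add: mult_less_0_iff)
qed

lemma replication_excess:
  fixes q Q r :: real
  assumes "q > 1" "Q \<ge> 1" "(q - 1) * r = q * Q - 1"
  shows "Q \<le> r" "(q - 1) * (r - Q) \<le> Q"
proof -
  have excess: "(q - 1) * (r - Q) = Q - 1" using assms(3) by (simp add: algebra_simps)
  then show "(q - 1) * (r - Q) \<le> Q" by simp
  have "(q - 1) * (r - Q) \<ge> 0" using excess assms(2) by simp
  then show "Q \<le> r" using assms(1) by (simp add: zero_le_mult_iff)
qed

lemma point_quotient_excess:
  fixes q Q r :: real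
  assumes "q > 1" "(q - 1) * r = q * Q - 1"
  shows "(r * q + 1) / (q + 1) = Q + (r - Q) / (q + 1)"
proof -
  have "r * q + 1 = (q + 1) * Q + (r - Q)" using assms(2) by (simp add: algebra_simps)
  then show ?thesis using assms(1) by (simp add: field_simps)
qed

lemma variance_at_twice:
  fixes q Q r m :: real
  assumes "4 \<le> m" "m \<le> q" "q \<le> Q" "(q - 1) * r = q * Q - 1"
  shows "2 * Q * (2 * Q - 1) \<le> (1 + m) * r * (2 * Q - (r * q + 1) / (q + 1))"
proof -
  have q: "q > 1" "Q \<ge> 1" using assms by auto
  note excess = replication_excess[OF q assms(4)]
  have "3 * (r - Q) \<le> (q - 1) * (r - Q)" using excess assms(1,2) by (intro mult_right_mono) auto
  moreover have "5 * Q \<le> (q + 1) * Q" using assms(1,2) q by (intro mult_right_mono) auto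
  ultimately have "r - Q \<le> (q + 1) * (Q / 5)" using excess by simp
  then have "(r - Q) / (q + 1) \<le> Q / 5" using q by (simp add: pos_divide_le_eq mult.commute)
  then have "4 * Q / 5 \<le> 2 * Q - (r * q + 1) / (q + 1)"
    using point_quotient_excess[OF q(1) assms(4)] by simp
  moreover have "5 \<le> 1 + m" "Q \<le> r" using assms(1) excess by auto
  ultimately have "5 * Q * (4 * Q / 5) \<le> (1 + m) * r * (2 * Q - (r * q + 1) / (q + 1))"
    using q by (intro mult_mono) auto
  then show ?thesis using q by (simp add: algebra_simps)
qed

text \<open>(Q + 2Q/m)^2 < (1 + m) 2Q^2/m for m \<ge> 4, since (m + 2)^2 < 2m(1 + m).\<close>
lemma bound_square_lt:
  fixes m Q :: real
  assumes "4 \<le> m" "Q > 0"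
  shows "(Q + 2 * Q / m) * (Q + 2 * Q / m) < (1 + m) * (Q * (2 * Q / m))"
proof -
  have m: "m > 0" using assms(1) by simp
  have "4 * m \<le> m * m" using assms(1) by (intro mult_right_mono) auto
  moreover have "(m + 2) * (m + 2) = m * m + 4 * m + 4" by (simp add: algebra_simps)
  moreover have "2 * m * (1 + m) = 2 * (m * m) + 2 * m" by (simp add: algebra_simps)
  ultimately have "(m + 2) * (m + 2) < 2 * m * (1 + m)" using assms(1) by argo
  then have "(m + 2) * (m + 2) * (Q * Q) < 2 * m * (1 + m) * (Q * Q)" using assms(2) by simp
  then have "(m + 2) * (m + 2) * (Q * Q) / (m * m) < 2 * m * (1 + m) * (Q * Q) / (m * m)"
    using m by (intro divide_strict_right_mono) auto
  moreover have "(Q + 2 * Q / m) * (Q + 2 * Q / m) = (m + 2) * (m + 2) * (Q * Q) / (m * m)"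
    using m by (simp add: field_simps)
  moreover have "(1 + m) * (Q * (2 * Q / m)) = 2 * m * (1 + m) * (Q * Q) / (m * m)"
    using m by (simp add: field_simps)
  ultimately show ?thesis by simp
qed

lemma variance_at_bound:
  fixes q Q r m :: real
  assumes "4 \<le> m" "m \<le> q" "q \<le> Q" "(q - 1) * r = q * Q - 1"
  defines "b0 \<equiv> Q + 2 * Q / m"
  shows "b0 * (b0 - 1) < (1 + m) * r * (b0 - (r * q + 1) / (q + 1))"
proof -
  have q: "q > 1" "Q \<ge> 1" and m: "m > 0" using assms by auto
  note excess = replication_excess[OF q assms(4)]
  define d where "d = r - Q"
  define t where "t = 2 * Q / m"
  have "r / (q + 1) \<le> t"
  proof -
    have "3 * (r - Q) \<le> (q - 1) * (r - Q)" using excess assms(1,2) by (intro mult_right_mono) auto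
    then have "r \<le> 2 * Q" using excess by simp
    moreover have "q * r = q * Q - 1 + r" using assms(4) by (simp add: algebra_simps)
    moreover have "0 \<le> q * Q" using q by simp
    ultimately have "q * r \<le> (q + 1) * (2 * Q)" by (simp add: algebra_simps)
    then have "r / (q + 1) \<le> 2 * Q / q" using q by (simp add: divide_simps mult.commute)
    also have "\<dots> \<le> t" unfolding t_def using assms(2) m q by (simp add: frac_le)
    finally show ?thesis .
  qed
  then have "0 \<le> d * (t - r / (q + 1))" using excess unfolding d_def by simp
  moreover have "b0 - (r * q + 1) / (q + 1) = t - d / (q + 1)"
    unfolding b0_def t_def d_def point_quotient_excess[OF q(1) assms(4)] by simp
  moreover have "r * (t - d / (q + 1)) = Q * t + d * (t - r / (q + 1))"
    unfolding d_def using q by (simp add: field_simps)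
  ultimately have "(1 + m) * (Q * t) \<le> (1 + m) * r * (b0 - (r * q + 1) / (q + 1))"
    using m by (simp add: mult.assoc)
  moreover have "b0 * b0 < (1 + m) * (Q * t)"
    unfolding b0_def t_def using bound_square_lt[OF assms(1)] q by simp
  moreover have "b0 * (b0 - 1) \<le> b0 * b0"
    using q m unfolding b0_def by (intro mult_left_mono) auto
  ultimately show ?thesis by linarith
qed

lemma replication_from_point_count:
  fixes q Q N r :: real
  assumes "q > 1" "(q - 1) * N = q * q * Q - 1" "N = r * q + 1"
  shows "(q - 1) * r = q * Q - 1"
proof -
  have "q * ((q - 1) * r) = q * (q * Q - 1)" using assms(2,3) by (simp add: algebra_simps)
  then show ?thesis using assms(1) by simp
qed

lemma size_bound_from_variance:
  fixes q Q N r m b :: real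
  assumes "4 \<le> m" "m \<le> q" "q \<le> Q"
    and points: "(q - 1) * N = q * q * Q - 1" "N = r * q + 1"
    and "b < 2 * Q"
    and variance: "(1 + m) * r * (b - N / (q + 1)) \<le> b * (b - 1)"
  shows "b \<le> Q + 2 * Q / m"
proof (rule ccontr)
  assume "\<not> b \<le> Q + 2 * Q / m"
  have repl: "(q - 1) * r = q * Q - 1"
    using assms(1,2) points by (intro replication_from_point_count) auto
  define c where "c = N / (q + 1)"
  have c: "c = (r * q + 1) / (q + 1)" unfolding c_def points(2) ..
  define \<beta> where "\<beta> = - 1 - (1 + m) * r"
  have f: "x * (x - 1) - (1 + m) * r * (x - c) = x * x + \<beta> * x + (1 + m) * r * c" for x
    unfolding \<beta>_def by (simp add: algebra_simps)
  have "b * b + \<beta> * b + (1 + m) * r * c < 0"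
  proof (rule monic_quadratic_negative_between)
    show "(Q + 2 * Q / m) * (Q + 2 * Q / m) + \<beta> * (Q + 2 * Q / m) + (1 + m) * r * c < 0"
      using variance_at_bound[OF assms(1-3) repl] f unfolding c by (metis diff_less_0_iff_less)
    show "2 * Q * (2 * Q) + \<beta> * (2 * Q) + (1 + m) * r * c \<le> 0"
      using variance_at_twice[OF assms(1-3) repl] f unfolding c by (metis diff_le_0_iff_le)
  qed (use \<open>\<not> b \<le> _\<close> assms(6) in auto)
  then show False using variance f unfolding c_def by (metis diff_less_0_iff_less not_le)
qed


lemma pg_finite_linear_space:
  "finite_linear_space (pg_points n :: (nat \<Rightarrow> 'a::{finite,field}) set set) (pg_lines n) (\<subseteq>) CARD('a)"
proof
  show "finite (pg_points n :: (nat \<Rightarrow> 'a) set set)" "finite (pg_lines n :: (nat \<Rightarrow> 'a) set set)"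
    by (rule finite_pg_points, rule finite_pg_lines)
  show "1 \<le> CARD('a)" by (simp add: Suc_leI)
  show "card {P \<in> pg_points n. P \<subseteq> L} = CARD('a) + 1" if "L \<in> pg_lines n" for L :: "(nat \<Rightarrow> 'a) set"
    using that by (rule card_points_on_line)
  show "card {L \<in> pg_lines n. P \<subseteq> L \<and> Q \<subseteq> L} = 1"
    if "P \<in> pg_points n" "Q \<in> pg_points n" "P \<noteq> Q" for P Q :: "(nat \<Rightarrow> 'a) set"
    using that by (rule card_lines_through_two_points)
qed

lemma card_pg_points_real:
  assumes "n \<ge> 1"
  shows "(real CARD('a) - 1) * real (card (pg_points n :: (nat \<Rightarrow> 'a::{finite,field}) set set))
           = real CARD('a) * real CARD('a) * real CARD('a) ^ (n - 1) - 1"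
proof -
  have "CARD('a) \<ge> 1" by (simp add: Suc_leI finite_UNIV_card_ge_0)
  then have "real (card (pg_points n :: (nat \<Rightarrow> 'a) set set) * (CARD('a) - 1))
      = real (CARD('a) ^ Suc n - 1)"
    using card_pg_points[where n = n, where 'a = 'a] by simp
  then have "real (card (pg_points n :: (nat \<Rightarrow> 'a) set set)) * (real CARD('a) - 1)
      = real CARD('a) ^ Suc n - 1"
    using \<open>CARD('a) \<ge> 1\<close> by (simp add: of_nat_diff)
  moreover have "real CARD('a) ^ Suc n = real CARD('a) * real CARD('a) * real CARD('a) ^ (n - 1)"
    using assms by (cases n) auto
  ultimately show ?thesis by (simp add: mult.commute)
qed

text \<open>If e is maximal with lines meeting B in 1 mod p^e points, some line meets B in
  more than one point: otherwise every modulus would do.\<close>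
lemma maximal_modulus_secant:
  assumes "\<forall>e'. lines_meet_one_mod n B (p ^ e') \<longrightarrow> e' \<le> e"
  shows "\<exists>L \<in> pg_lines n. card {P \<in> B. P \<subseteq> L} \<noteq> 1"
proof (rule ccontr)
  assume "\<not> ?thesis"
  then have "lines_meet_one_mod n B (p ^ Suc e)" unfolding lines_meet_one_mod_def by auto
  then show False using assms by fastforce
qed

theorem theorem2:
  fixes B :: "(nat \<Rightarrow> 'a::{finite,field}) set set"
    and n p h e :: nat
  assumes "n \<ge> 2"
    and "prime p" and "h \<ge> 1" and "CARD('a) = p ^ h"
    and "minimal_blocking_set n B"
    and "lines_meet_one_mod n B (p ^ e)"
    and "\<forall>e'. lines_meet_one_mod n B (p ^ e') \<longrightarrow> e' \<le> e"
    and "p ^ e > 3"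
    and "((real CARD('a)) ^ n - 1) / (real CARD('a) - 1) < real (card B)"
    and "card B < 2 * CARD('a) ^ (n - 1)"
  shows "real (card B) \<le> real CARD('a) ^ (n - 1) + 2 * real CARD('a) ^ (n - 1) / real p ^ e"
proof -
  interpret pg: finite_linear_space "pg_points n :: (nat \<Rightarrow> 'a) set set" "pg_lines n" "(\<subseteq>)" "CARD('a)"
    by (rule pg_finite_linear_space)
  have B: "B \<subseteq> pg_points n"
    using assms(5) by (simp add: minimal_blocking_set_def blocking_set_def)
  have one_mod: "card {P \<in> B. P \<subseteq> L} mod p ^ e = 1" if "L \<in> pg_lines n" for L
  proof -
    have "1 mod p ^ e = (1::nat)" using assms(8) by (intro mod_less) simp
    then show ?thesis using assms(6) that unfolding lines_meet_one_mod_def by simp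
  qed
  obtain L where L: "L \<in> pg_lines n" "card {P \<in> B. P \<subseteq> L} \<noteq> 1"
    using maximal_modulus_secant[OF assms(7)] by blast
  have "p ^ e \<le> CARD('a)" using pg.modulus_le_order[OF B L(1) one_mod[OF L(1)] L(2)] .
  have "real (card B) \<le> real CARD('a) ^ (n - 1) + 2 * real CARD('a) ^ (n - 1) / real (p ^ e)"
  proof (rule size_bound_from_variance[where N = "real (card (pg_points n :: (nat \<Rightarrow> 'a) set set))"
        and r = "real pg.replication"])
    have "4 \<le> p ^ e" using assms(8) by simp
    then show "4 \<le> real (p ^ e)" by (metis of_nat_le_iff of_nat_numeral)
    show "real (p ^ e) \<le> real CARD('a)" using \<open>p ^ e \<le> CARD('a)\<close> by (simp only: of_nat_le_iff)
    show "real CARD('a) \<le> real CARD('a) ^ (n - 1)"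
      using assms(1) \<open>p ^ e \<le> CARD('a)\<close> by (simp add: self_le_power)
    show "(real CARD('a) - 1) * real (card (pg_points n :: (nat \<Rightarrow> 'a) set set))
        = real CARD('a) * real CARD('a) * real CARD('a) ^ (n - 1) - 1"
      using assms(1) by (intro card_pg_points_real) simp
    show "real (card (pg_points n :: (nat \<Rightarrow> 'a) set set)) = real pg.replication * real CARD('a) + 1"
      using pg.card_points[OF L(1)] by simp
    show "real (card B) < 2 * real CARD('a) ^ (n - 1)"
      using assms(10) by (metis of_nat_less_iff of_nat_mult of_nat_numeral of_nat_power)
  qed (use pg.variance_inequality[OF B one_mod] in simp)
  then show ?thesis by simp
qed


end
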